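(* Let $L_{\max},V_{\max},S,N,B,D>0$ and, for vehicle density $\lambda\in[0,L_{\max}]$, let $\mu(\lambda)=\frac{V_{\max}}{S}\left(1-\frac{\lambda}{L_{\max}}\right)$ (linear speed-density relationship $V(\lambda)=V_{\max}(1-\lambda/L_{\max})$, $\mu=V/S$). In the short deadline regime, where the average deadline violation probability is $\exp\left(-\frac{\lambda S}{2N}B\mu(\lambda)^2D^2\right)$, the vehicle density minimizing the average deadline violation probability over $0\le\lambda\le L_{\max}$ is $L^\dagger=\frac{L_{\max}}{3}$.
   Context: $V_{\max}$ is the speed limit, $L_{\max}$ the traffic-jam vehicle density, $S$ the road length, $B$ the number of roadside units, $N$ the number of tasks, $D$ the deadline, and $\mu$ the rate at which a vehicle meets a given roadside unit. *)

theory Defs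
  imports Complex_Main
begin

definition mu :: "real \<Rightarrow> real \<Rightarrow> real \<Rightarrow> real \<Rightarrow> real" where
  "mu Vmax S Lmax lam = Vmax / S * (1 - lam / Lmax)"

definition avg_dvp :: "real \<Rightarrow> real \<Rightarrow> real \<Rightarrow> real \<Rightarrow> real \<Rightarrow> real \<Rightarrow> real \<Rightarrow> real" where
  "avg_dvp Vmax S Lmax N B D lam =
     exp (- (lam * S / (2 * N)) * B * (mu Vmax S Lmax lam)^2 * D^2)"

end

theory Submission
  imports Defs
begin

text \<open>The exponent of the violation probability is a negative constant times the cubic
  \<open>\<lambda> (1 - \<lambda>/L)\<^sup>2\<close>. On \<open>[0, L]\<close> this cubic is at most \<open>4L/27\<close>, since the gap factors as
  \<open>L (\<lambda>/L - 1/3)\<^sup>2 (4/3 - \<lambda>/L)\<close>, which vanishes there only at \<open>\<lambda> = L/3\<close>; as \<open>exp\<close> is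
  strictly increasing, \<open>L/3\<close> is the unique minimiser.\<close>

lemma cubic_max_gap_factorization:
  fixes L t :: real
  assumes "L \<noteq> 0"
  shows "L * 4 / 27 - t * (1 - t / L)^2 = L * (t / L - 1 / 3)^2 * (4 / 3 - t / L)"
  using assms by (simp add: field_simps power2_eq_square)

lemma cubic_le_max:
  fixes L t :: real
  assumes "L > 0" "t \<le> L"
  shows "t * (1 - t / L)^2 \<le> L * 4 / 27"
proof -
  have "4 / 3 - t / L > 0" using assms by (simp add: field_simps)
  then have "0 \<le> L * (t / L - 1 / 3)^2 * (4 / 3 - t / L)" using assms by simp
  then show ?thesis using cubic_max_gap_factorization[of L t] assms by linarith
qed

lemma cubic_eq_max_iff:
  fixes L t :: real
  assumes "L > 0" "t \<le> L"
  shows "t * (1 - t / L)^2 = L * 4 / 27 \<longleftrightarrow> t = L / 3"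
proof -
  have "4 / 3 - t / L > 0" using assms by (simp add: field_simps)
  then have "t * (1 - t / L)^2 = L * 4 / 27 \<longleftrightarrow> L * (t / L - 1 / 3)^2 * (4 / 3 - t / L) = 0"
    using cubic_max_gap_factorization[of L t] assms by linarith
  also have "\<dots> \<longleftrightarrow> t / L = 1 / 3" using \<open>4 / 3 - t / L > 0\<close> assms by simp
  also have "\<dots> \<longleftrightarrow> t = L / 3" using assms by (auto simp: field_simps)
  finally show ?thesis .
qed

lemma avg_dvp_eq_exp_cubic:
  assumes "S > 0" "N > 0" "Lmax > 0"
  shows "avg_dvp Vmax S Lmax N B D lam =
     exp (- (B * Vmax^2 * D^2 / (2 * N * S)) * (lam * (1 - lam / Lmax)^2))"
  unfolding avg_dvp_def mu_def using assms
  by (simp add: field_simps power2_eq_square)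

theorem corollary2:
  fixes Lmax Vmax S N B D :: real
  assumes "Lmax > 0" "Vmax > 0" "S > 0" "N > 0" "B > 0" "D > 0"
  shows "Lmax / 3 \<in> {0..Lmax} \<and>
         (\<forall>lam\<in>{0..Lmax}. avg_dvp Vmax S Lmax N B D (Lmax / 3) \<le> avg_dvp Vmax S Lmax N B D lam) \<and>
         (\<forall>lam\<in>{0..Lmax}. avg_dvp Vmax S Lmax N B D lam = avg_dvp Vmax S Lmax N B D (Lmax / 3) \<longrightarrow> lam = Lmax / 3)"
proof -
  define C where "C = B * Vmax^2 * D^2 / (2 * N * S)"
  have "C > 0" unfolding C_def using assms by simp
  have dvp: "avg_dvp Vmax S Lmax N B D t = exp (- C * (t * (1 - t / Lmax)^2))" for t
    using avg_dvp_eq_exp_cubic[OF assms(3,4,1)] unfolding C_def .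
  have at_third: "avg_dvp Vmax S Lmax N B D (Lmax / 3) = exp (- C * (Lmax * 4 / 27))"
    using cubic_eq_max_iff[of Lmax "Lmax / 3"] assms unfolding dvp by simp
  show ?thesis
  proof (intro conjI ballI impI)
    show "Lmax / 3 \<in> {0..Lmax}" using assms by simp
  next
    fix lam assume "lam \<in> {0..Lmax}"
    then have "C * (lam * (1 - lam / Lmax)^2) \<le> C * (Lmax * 4 / 27)"
      using cubic_le_max[OF assms(1), of lam] \<open>C > 0\<close> by (simp add: mult_left_mono)
    then show "avg_dvp Vmax S Lmax N B D (Lmax / 3) \<le> avg_dvp Vmax S Lmax N B D lam"
      unfolding at_third dvp[of lam] exp_le_cancel_iff by linarith
  next
    fix lam assume "lam \<in> {0..Lmax}"
      and "avg_dvp Vmax S Lmax N B D lam = avg_dvp Vmax S Lmax N B D (Lmax / 3)"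
    then have "lam * (1 - lam / Lmax)^2 = Lmax * 4 / 27"
      unfolding at_third dvp[of lam] using \<open>C > 0\<close> by simp
    then show "lam = Lmax / 3" using cubic_eq_max_iff[OF assms(1)] \<open>lam \<in> {0..Lmax}\<close> by simp
  qed
qed

end
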